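(* Let $\varphi$ be an LTL formula over $2^{V_i}$ and let $\mathcal{A}_\varphi$ be an ACA with $\mathcal{L}(\mathcal{A}_\varphi)=\mathcal{L}(\varphi)$. Let $s$ be a strategy for process $p_i$. If $s$ is delay-dominant for $\mathcal{A}_\varphi$, then $s$ is remorsefree dominant for $\varphi$.
   Context: Automata. For a finite set $\Sigma$ of atomic propositions, an alternating co-Büchi automaton (ACA) over $2^\Sigma$ is a tuple $\mathcal{A}=(Q,q_0,\delta,F)$ with a finite set of states $Q$, initial state $q_0\in Q$, set of rejecting states $F\subseteq Q$, and transition function $\delta:Q\times 2^\Sigma\to\mathbb{B}^+(Q)$ into positive Boolean formulas over $Q$ given in disjunctive normal form; $\delta(q,a)$ is identified with the set of its disjuncts, each disjunct $c\in\delta(q,a)$ being a set of states. A run tree of $\mathcal{A}$ on $\sigma=\sigma_0\sigma_1\cdots\in(2^\Sigma)^\omega$ is a $Q$-labeled tree $(T,\ell)$ ($T\subseteq\mathbb{N}^*$ prefix-closed) with $\ell(\varepsilon)=q_0$ and $\{\ell(x')\mid x'\text{ a child of }x\}\in\delta(\ell(x),\sigma_{|x|})$ for every node $x$; it is accepting if every infinite branch visits $F$ only finitely often. $\mathcal{A}$ accepts $\sigma$ if some run tree on $\sigma$ is accepting; $\mathcal{L}(\mathcal{A})$ is the set of accepted words. For an LTL formula $\varphi$, $\mathcal{L}(\varphi)$ is the set of infinite words satisfying $\varphi$. (As implicit in the game below, each $\delta(q,a)$ and each of its disjuncts is nonempty.) Processes and strategies. A process $p_i$ has disjoint finite sets $I_i$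 of input and $O_i$ of output variables; $V_i=I_i\cup O_i$. A strategy for $p_i$ is a function $s:(2^{I_i})^*\to 2^{O_i}$ representable by a finite Moore machine. For $\gamma\in(2^{I_i})^\omega$ the computation $\mathrm{comp}(s,\gamma)\in(2^{V_i})^\omega$ is given by $\mathrm{comp}(s,\gamma)_j=\gamma_j\cup s(\gamma_0\cdots\gamma_{j-1})$ for all $j\ge 0$. Delay-dominance game. Let $\mathcal{A}=(Q,q_0,\delta,F)$ be an ACA and $\sigma,\sigma'$ infinite words over its alphabet. The game $(\mathcal{A},\sigma,\sigma')$ is played between Duplicator (Player 0) and Spoiler (Player 1) on positions of the forms $((p,q),j)$ and $((p,q,c,c'),j)$ (owned by Spoiler) and $((p,q,c),j)$ and $((p,q,c,q'),j)$ (owned by Duplicator), with $p,q,q'\in Q$, $c,c'\subseteq Q$, $j\in\mathbb{N}$. Moves: from $((p,q),j)$ to $((p,q,c),j)$ with $c\in\delta(p,\sigma_j)$; from $((p,q,c),j)$ to $((p,q,c,c'),j)$ with $c'\in\delta(q,\sigma'_j)$; from $((p,q,c,c'),j)$ to $((p,q,c,q'),j)$ with $q'\in c'$; from $((p,q,c,q'),j)$ to $((p',q'),j+1)$ with $p'\in c$. The initial position is $((q_0,q_0),0)$. For a position whose state tuple is $(p,q)$, $(p,q,c)$, $(p,q,c,c')$ or $(p,q,c,q')$, its alternative state is $p$ and its dominant state is $q$. A play $\rho_0\rho_1\cdots$ is won by Duplicator iff for every $k$ such that the dominant state of $\rho_k$ lies in $F$ there is $k'\ge k$ such that the alternative state of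 $\rho_{k'}$ lies in $F$. A strategy of a player maps finite play prefixes ending in one of its positions to a legal successor; a Duplicator strategy is winning if every play from the initial position consistent with it is won by Duplicator. Delay-dominance. For strategies $s,t$ of $p_i$, an ACA $\mathcal{A}$ over $2^{V_i}$ and $\gamma\in(2^{I_i})^\omega$: $s$ delay-dominates $t$ on $\gamma$ if Duplicator has a winning strategy in $(\mathcal{A},\mathrm{comp}(t,\gamma),\mathrm{comp}(s,\gamma))$; $s$ delay-dominates $t$ if this holds for all $\gamma$; $s$ is delay-dominant for $\mathcal{A}$ (and $p_i$) if it delay-dominates every strategy $t$ for $p_i$. Remorsefree dominance. A strategy $s$ for $p_i$ is winning for $\varphi$ if $\mathrm{comp}(s,\gamma)\models\varphi$ for all $\gamma\in(2^{I_i})^\omega$; $s$ is remorsefree dominant for $\varphi$ if for every strategy $t$ for $p_i$ and every $\gamma\in(2^{I_i})^\omega$, $\mathrm{comp}(t,\gamma)\models\varphi$ implies $\mathrm{comp}(s,\gamma)\models\varphi$. *)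

theory Defs
  imports Main
begin

definition word_over :: "'ap set \<Rightarrow> (nat \<Rightarrow> 'ap set) \<Rightarrow> bool" where
  "word_over V \<sigma> \<longleftrightarrow> (\<forall>j. \<sigma> j \<subseteq> V)"

datatype 'ap ltl =
    LTrue
  | LProp 'ap
  | LNot "'ap ltl"
  | LAnd "'ap ltl" "'ap ltl"
  | LNext "'ap ltl"
  | LUntil "'ap ltl" "'ap ltl"

fun ltl_props :: "'ap ltl \<Rightarrow> 'ap set" where
  "ltl_props LTrue = {}"
| "ltl_props (LProp a) = {a}"
| "ltl_props (LNot f) = ltl_props f"
| "ltl_props (LAnd f g) = ltl_props f \<union> ltl_props g"
| "ltl_props (LNext f) = ltl_props f"
| "ltl_props (LUntil f g) = ltl_props f \<union> ltl_props g"

fun ltl_sat :: "(nat \<Rightarrow> 'ap set) \<Rightarrow> 'ap ltl \<Rightarrow> bool" where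
  "ltl_sat \<sigma> LTrue = True"
| "ltl_sat \<sigma> (LProp a) = (a \<in> \<sigma> 0)"
| "ltl_sat \<sigma> (LNot f) = (\<not> ltl_sat \<sigma> f)"
| "ltl_sat \<sigma> (LAnd f g) = (ltl_sat \<sigma> f \<and> ltl_sat \<sigma> g)"
| "ltl_sat \<sigma> (LNext f) = ltl_sat (\<lambda>j. \<sigma> (Suc j)) f"
| "ltl_sat \<sigma> (LUntil f g) =
     (\<exists>k. ltl_sat (\<lambda>j. \<sigma> (j + k)) g \<and> (\<forall>i<k. ltl_sat (\<lambda>j. \<sigma> (j + i)) f))"

text \<open>trans q a is the set of disjuncts (each a set of states) of the DNF formula delta(q,a).\<close>
record ('q, 'ap) aca =
  states :: "'q set"
  init :: 'q
  trans :: "'q \<Rightarrow> 'ap set \<Rightarrow> 'q set set"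
  rej :: "'q set"

definition aca_wf :: "'ap set \<Rightarrow> ('q, 'ap) aca \<Rightarrow> bool" where
  "aca_wf \<Sigma> A \<longleftrightarrow> finite \<Sigma> \<and> finite (states A) \<and> init A \<in> states A \<and> rej A \<subseteq> states A \<and>
     (\<forall>q\<in>states A. \<forall>a. a \<subseteq> \<Sigma> \<longrightarrow>
        finite (trans A q a) \<and> trans A q a \<noteq> {} \<and>
        (\<forall>c\<in>trans A q a. c \<noteq> {} \<and> c \<subseteq> states A))"

definition run_tree :: "('q, 'ap) aca \<Rightarrow> (nat \<Rightarrow> 'ap set) \<Rightarrow> nat list set \<Rightarrow> (nat list \<Rightarrow> 'q) \<Rightarrow> bool" where
  "run_tree A \<sigma> T l \<longleftrightarrow>
     [] \<in> T \<and> (\<forall>x y. x @ y \<in> T \<longrightarrow> x \<in> T) \<and> l [] = init A \<and>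
     (\<forall>x\<in>T. {l (x @ [n]) | n. x @ [n] \<in> T} \<in> trans A (l x) (\<sigma> (length x)))"

definition infinite_branch :: "nat list set \<Rightarrow> (nat \<Rightarrow> nat list) \<Rightarrow> bool" where
  "infinite_branch T b \<longleftrightarrow> b 0 = [] \<and> (\<forall>k. b k \<in> T \<and> (\<exists>n. b (Suc k) = b k @ [n]))"

definition accepting_run :: "('q, 'ap) aca \<Rightarrow> nat list set \<Rightarrow> (nat list \<Rightarrow> 'q) \<Rightarrow> bool" where
  "accepting_run A T l \<longleftrightarrow> (\<forall>b. infinite_branch T b \<longrightarrow> finite {k. l (b k) \<in> rej A})"

definition aca_accepts :: "('q, 'ap) aca \<Rightarrow> (nat \<Rightarrow> 'ap set) \<Rightarrow> bool" where
  "aca_accepts A \<sigma> \<longleftrightarrow> (\<exists>T l. run_tree A \<sigma> T l \<and> accepting_run A T l)"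

text \<open>A strategy for a process with inputs Inp and outputs Out: a function on finite input
  sequences with values in 2^Out that is representable by a finite Moore machine
  (states encoded as natural numbers).\<close>
definition is_strategy :: "'ap set \<Rightarrow> 'ap set \<Rightarrow> ('ap set list \<Rightarrow> 'ap set) \<Rightarrow> bool" where
  "is_strategy Inp Out s \<longleftrightarrow>
     (\<forall>w. set w \<subseteq> Pow Inp \<longrightarrow> s w \<subseteq> Out) \<and>
     (\<exists>(M::nat set) m0 \<tau> out. finite M \<and> m0 \<in> M \<and>
        (\<forall>m\<in>M. \<forall>a. a \<subseteq> Inp \<longrightarrow> \<tau> m a \<in> M) \<and>
        (\<forall>w. set w \<subseteq> Pow Inp \<longrightarrow> s w = out (foldl \<tau> m0 w)))"

definition comp :: "('ap set list \<Rightarrow> 'ap set) \<Rightarrow> (nat \<Rightarrow> 'ap set) \<Rightarrow> nat \<Rightarrow> 'ap set" where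
  "comp s \<gamma> j = \<gamma> j \<union> s (map \<gamma> [0..<j])"

datatype 'q gpos =
    PQ 'q 'q nat
  | PC 'q 'q "'q set" nat
  | PCC 'q 'q "'q set" "'q set" nat
  | PCQ 'q 'q "'q set" 'q nat

fun alt_state :: "'q gpos \<Rightarrow> 'q" where
  "alt_state (PQ p q j) = p"
| "alt_state (PC p q c j) = p"
| "alt_state (PCC p q c c' j) = p"
| "alt_state (PCQ p q c q' j) = p"

fun dom_state :: "'q gpos \<Rightarrow> 'q" where
  "dom_state (PQ p q j) = q"
| "dom_state (PC p q c j) = q"
| "dom_state (PCC p q c c' j) = q"
| "dom_state (PCQ p q c q' j) = q"

fun dup_owned :: "'q gpos \<Rightarrow> bool" where
  "dup_owned (PQ p q j) = False"
| "dup_owned (PC p q c j) = True"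
| "dup_owned (PCC p q c c' j) = False"
| "dup_owned (PCQ p q c q' j) = True"

inductive game_move :: "('q, 'ap) aca \<Rightarrow> (nat \<Rightarrow> 'ap set) \<Rightarrow> (nat \<Rightarrow> 'ap set) \<Rightarrow> 'q gpos \<Rightarrow> 'q gpos \<Rightarrow> bool"
  for A \<sigma> \<sigma>' where
  "c \<in> trans A p (\<sigma> j) \<Longrightarrow> game_move A \<sigma> \<sigma>' (PQ p q j) (PC p q c j)"
| "c' \<in> trans A q (\<sigma>' j) \<Longrightarrow> game_move A \<sigma> \<sigma>' (PC p q c j) (PCC p q c c' j)"
| "q' \<in> c' \<Longrightarrow> game_move A \<sigma> \<sigma>' (PCC p q c c' j) (PCQ p q c q' j)"
| "p' \<in> c \<Longrightarrow> game_move A \<sigma> \<sigma>' (PCQ p q c q' j) (PQ p' q' (Suc j))"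

definition game_init :: "('q, 'ap) aca \<Rightarrow> 'q gpos" where
  "game_init A = PQ (init A) (init A) 0"

definition play_prefix :: "('q, 'ap) aca \<Rightarrow> (nat \<Rightarrow> 'ap set) \<Rightarrow> (nat \<Rightarrow> 'ap set) \<Rightarrow> 'q gpos list \<Rightarrow> bool" where
  "play_prefix A \<sigma> \<sigma>' xs \<longleftrightarrow> xs \<noteq> [] \<and> hd xs = game_init A \<and>
     (\<forall>i. Suc i < length xs \<longrightarrow> game_move A \<sigma> \<sigma>' (xs ! i) (xs ! Suc i))"

definition is_play :: "('q, 'ap) aca \<Rightarrow> (nat \<Rightarrow> 'ap set) \<Rightarrow> (nat \<Rightarrow> 'ap set) \<Rightarrow> (nat \<Rightarrow> 'q gpos) \<Rightarrow> bool" where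
  "is_play A \<sigma> \<sigma>' \<rho> \<longleftrightarrow> \<rho> 0 = game_init A \<and> (\<forall>k. game_move A \<sigma> \<sigma>' (\<rho> k) (\<rho> (Suc k)))"

definition dup_wins_play :: "('q, 'ap) aca \<Rightarrow> (nat \<Rightarrow> 'q gpos) \<Rightarrow> bool" where
  "dup_wins_play A \<rho> \<longleftrightarrow>
     (\<forall>k. dom_state (\<rho> k) \<in> rej A \<longrightarrow> (\<exists>k'\<ge>k. alt_state (\<rho> k') \<in> rej A))"

definition dup_strategy :: "('q, 'ap) aca \<Rightarrow> (nat \<Rightarrow> 'ap set) \<Rightarrow> (nat \<Rightarrow> 'ap set) \<Rightarrow> ('q gpos list \<Rightarrow> 'q gpos) \<Rightarrow> bool" where
  "dup_strategy A \<sigma> \<sigma>' f \<longleftrightarrow>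
     (\<forall>xs. play_prefix A \<sigma> \<sigma>' xs \<and> dup_owned (last xs) \<longrightarrow> game_move A \<sigma> \<sigma>' (last xs) (f xs))"

definition consistent_dup :: "('q gpos list \<Rightarrow> 'q gpos) \<Rightarrow> (nat \<Rightarrow> 'q gpos) \<Rightarrow> bool" where
  "consistent_dup f \<rho> \<longleftrightarrow> (\<forall>k. dup_owned (\<rho> k) \<longrightarrow> \<rho> (Suc k) = f (map \<rho> [0..<Suc k]))"

definition dup_wins_game :: "('q, 'ap) aca \<Rightarrow> (nat \<Rightarrow> 'ap set) \<Rightarrow> (nat \<Rightarrow> 'ap set) \<Rightarrow> bool" where
  "dup_wins_game A \<sigma> \<sigma>' \<longleftrightarrow>
     (\<exists>f. dup_strategy A \<sigma> \<sigma>' f \<and>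
        (\<forall>\<rho>. is_play A \<sigma> \<sigma>' \<rho> \<and> consistent_dup f \<rho> \<longrightarrow> dup_wins_play A \<rho>))"

definition input_seq :: "'ap set \<Rightarrow> (nat \<Rightarrow> 'ap set) \<Rightarrow> bool" where
  "input_seq Inp \<gamma> \<longleftrightarrow> word_over Inp \<gamma>"

definition delay_dominates_on :: "('q, 'ap) aca \<Rightarrow> ('ap set list \<Rightarrow> 'ap set) \<Rightarrow> ('ap set list \<Rightarrow> 'ap set) \<Rightarrow> (nat \<Rightarrow> 'ap set) \<Rightarrow> bool" where
  "delay_dominates_on A s t \<gamma> \<longleftrightarrow> dup_wins_game A (comp t \<gamma>) (comp s \<gamma>)"

definition delay_dominates :: "('q, 'ap) aca \<Rightarrow> 'ap set \<Rightarrow> ('ap set list \<Rightarrow> 'ap set) \<Rightarrow> ('ap set list \<Rightarrow> 'ap set) \<Rightarrow> bool" where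
  "delay_dominates A Inp s t \<longleftrightarrow> (\<forall>\<gamma>. input_seq Inp \<gamma> \<longrightarrow> delay_dominates_on A s t \<gamma>)"

definition delay_dominant :: "('q, 'ap) aca \<Rightarrow> 'ap set \<Rightarrow> 'ap set \<Rightarrow> ('ap set list \<Rightarrow> 'ap set) \<Rightarrow> bool" where
  "delay_dominant A Inp Out s \<longleftrightarrow> (\<forall>t. is_strategy Inp Out t \<longrightarrow> delay_dominates A Inp s t)"

definition remorsefree_dominant :: "'ap ltl \<Rightarrow> 'ap set \<Rightarrow> 'ap set \<Rightarrow> ('ap set list \<Rightarrow> 'ap set) \<Rightarrow> bool" where
  "remorsefree_dominant \<phi> Inp Out s \<longleftrightarrow>
     (\<forall>t \<gamma>. is_strategy Inp Out t \<and> input_seq Inp \<gamma> \<and> ltl_sat (comp t \<gamma>) \<phi> \<longrightarrow> ltl_sat (comp s \<gamma>) \<phi>)"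

end

theory Submission
  imports Defs "HOL-Library.Countable_Set" "HOL-Library.Sublist"
begin

text \<open>If Duplicator wins the delay-dominance game on (\<sigma>, \<sigma>'), then \<sigma> \<in> L(A) implies
  \<sigma>' \<in> L(A). Given an accepting run tree of A on \<sigma>, let Spoiler replay it: each round he
  opens with the disjunct that the run tree chose, and after Duplicator has answered with a
  disjunct for \<sigma>' he picks one of its states. Letting Spoiler's pick range over all states of
  Duplicator's disjunct turns Duplicator's answers into a run tree on \<sigma>'. Along each of its
  branches the alternative states follow a branch of the accepting run, so they are rejecting
  only finitely often, and by Duplicator's winning condition so are the dominant states.
  Applied to the computations of an arbitrary strategy t and of the delay-dominant s on the same
  input, with L(A) = L(\<phi>), this is remorsefree dominance.\<close>

fun phase :: "'q gpos \<Rightarrow> nat" where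
  "phase (PQ p q j) = 0"
| "phase (PC p q c j) = 1"
| "phase (PCC p q c c' j) = 2"
| "phase (PCQ p q c q' j) = 3"

lemma game_move_phase: "game_move A \<sigma> \<sigma>' x y \<Longrightarrow> phase y = Suc (phase x) mod 4"
  by (induction rule: game_move.induct) auto

lemma game_move_alt_state: "game_move A \<sigma> \<sigma>' x y \<Longrightarrow> phase x < 3 \<Longrightarrow> alt_state y = alt_state x"
  by (induction rule: game_move.induct) auto

lemma is_play_phase:
  assumes "is_play A \<sigma> \<sigma>' \<rho>"
  shows "phase (\<rho> i) = i mod 4"
proof (induction i)
  case 0
  then show ?case using assms by (simp add: is_play_def game_init_def)
next
  case (Suc i)
  then show ?case
    using assms game_move_phase unfolding is_play_def by (metis mod_Suc_eq)
qed

lemma is_play_alt_state_round: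
  assumes "is_play A \<sigma> \<sigma>' \<rho>"
  shows "alt_state (\<rho> i) = alt_state (\<rho> (4 * (i div 4)))"
proof -
  have "alt_state (\<rho> (4 * k + r)) = alt_state (\<rho> (4 * k))" if "r < 4" for k r
    using that
  proof (induction r)
    case (Suc r)
    have "phase (\<rho> (4 * k + r)) < 3"
      using is_play_phase[OF assms, of "4 * k + r"] Suc.prems by simp
    then show ?case
      using Suc assms game_move_alt_state unfolding is_play_def by fastforce
  qed simp
  from this[of "i mod 4" "i div 4"] show ?thesis by simp
qed

lemma dup_wins_play_round_starts:
  assumes "is_play A \<sigma> \<sigma>' \<rho>" "dup_wins_play A \<rho>"
    and "finite {k. alt_state (\<rho> (4 * k)) \<in> rej A}"
  shows "finite {k. dom_state (\<rho> (4 * k)) \<in> rej A}"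
proof -
  obtain M where M: "\<And>k. alt_state (\<rho> (4 * k)) \<in> rej A \<Longrightarrow> k \<le> M"
    using assms(3) finite_nat_set_iff_bounded_le by auto
  have "k \<le> M" if rejecting: "dom_state (\<rho> (4 * k)) \<in> rej A" for k
  proof -
    obtain k' where "4 * k \<le> k'" "alt_state (\<rho> k') \<in> rej A"
      using assms(2) rejecting unfolding dup_wins_play_def by blast
    then have "k \<le> k' div 4" "alt_state (\<rho> (4 * (k' div 4))) \<in> rej A"
      using is_play_alt_state_round[OF assms(1)] by auto
    then show ?thesis using M by fastforce
  qed
  then show ?thesis
    by (meson finite_nat_set_iff_bounded_le mem_Collect_eq)
qed

definition consistent_dup_prefix :: "('q gpos list \<Rightarrow> 'q gpos) \<Rightarrow> 'q gpos list \<Rightarrow> bool" where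
  "consistent_dup_prefix f H \<longleftrightarrow>
     (\<forall>i. Suc i < length H \<longrightarrow> dup_owned (H ! i) \<longrightarrow> H ! Suc i = f (take (Suc i) H))"

lemma play_prefix_snoc:
  assumes "play_prefix A \<sigma> \<sigma>' H" "game_move A \<sigma> \<sigma>' (last H) y"
  shows "play_prefix A \<sigma> \<sigma>' (H @ [y])"
  using assms unfolding play_prefix_def
  by (auto simp: nth_append last_conv_nth less_Suc_eq) (metis One_nat_def diff_Suc_1)

lemma consistent_dup_prefix_snoc:
  assumes "consistent_dup_prefix f H" "H \<noteq> [] \<Longrightarrow> dup_owned (last H) \<Longrightarrow> y = f H"
  shows "consistent_dup_prefix f (H @ [y])"
  using assms unfolding consistent_dup_prefix_def
  by (auto simp: nth_append last_conv_nth less_Suc_eq)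
    (metis One_nat_def diff_Suc_1 length_greater_0_conv zero_less_Suc)

lemma prefix_chain_nth:
  assumes chain: "\<And>k. prefix (H k) (H (Suc k))" and long: "\<And>k. k < length (H k)"
    and "i < length (H k)"
  shows "H i ! i = H k ! i"
proof -
  have mono: "prefix (H k) (H k')" if "k \<le> k'" for k k'
    using that by (induction k' rule: dec_induct) (auto intro: prefix_order.trans chain)
  have nth: "H k ! i = H k' ! i" if "prefix (H k) (H k')" "i < length (H k)" for k k'
    using that by (auto simp: prefix_def nth_append)
  show ?thesis
  proof (cases "i \<le> k")
    case True
    then show ?thesis using nth[OF mono[OF True] long] by simp
  next
    case False
    then have "k \<le> i" by simp
    with nth[OF mono \<open>i < length (H k)\<close>] show ?thesis by simp
  qed
qed

lemma play_of_prefix_chain: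
  assumes chain: "\<And>k. prefix (H k) (H (Suc k))" and long: "\<And>k. k < length (H k)"
    and plays: "\<And>k. play_prefix A \<sigma> \<sigma>' (H k)"
    and consistent: "\<And>k. consistent_dup_prefix f (H k)"
  shows "is_play A \<sigma> \<sigma>' (\<lambda>i. H i ! i)" and "consistent_dup f (\<lambda>i. H i ! i)"
proof -
  let ?\<rho> = "\<lambda>i. H i ! i"
  have at: "?\<rho> j = H (Suc i) ! j" if "j \<le> Suc i" for i j
    using prefix_chain_nth[OF chain long] long[of "Suc i"] that by simp
  have "?\<rho> 0 = hd (H 0)"
    using long[of 0] by (simp add: hd_conv_nth)
  moreover have "game_move A \<sigma> \<sigma>' (?\<rho> i) (?\<rho> (Suc i))" for i
    using plays[of "Suc i"] long[of "Suc i"] at[where i=i and j=i] at[where i=i and j="Suc i"]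
    unfolding play_prefix_def by simp
  ultimately show "is_play A \<sigma> \<sigma>' ?\<rho>"
    using plays[of 0] unfolding is_play_def play_prefix_def by simp
  have prefix_map: "map ?\<rho> [0..<Suc i] = take (Suc i) (H (Suc i))" for i
    using long[of "Suc i"] at[where i=i] by (intro nth_equalityI) (auto simp del: upt_Suc)
  show "consistent_dup f ?\<rho>"
    unfolding consistent_dup_def
  proof (intro allI impI)
    fix i
    assume "dup_owned (?\<rho> i)"
    then show "?\<rho> (Suc i) = f (map ?\<rho> [0..<Suc i])"
      using consistent[of "Suc i"] long[of "Suc i"] at[where i=i and j=i] at[where i=i and j="Suc i"]
      unfolding prefix_map consistent_dup_prefix_def by simp
  qed
qed

text \<open>Spoiler's moves in the replay: open with the disjunct c of the given run tree, and pick
  the n-th state of Duplicator's disjunct, n being the direction taken in the new run tree.\<close>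

fun open_with :: "'q set \<Rightarrow> 'q gpos \<Rightarrow> 'q gpos" where
  "open_with c (PQ p q j) = PC p q c j"
| "open_with c x = x"

fun pick_nth :: "nat \<Rightarrow> 'q gpos \<Rightarrow> 'q gpos" where
  "pick_nth n (PCC p q c c' j) = PCQ p q c (from_nat_into c' n) j"
| "pick_nth n x = x"

locale run_transfer =
  fixes \<Sigma> :: "'ap set" and A :: "('q, 'ap) aca" and \<sigma> \<sigma>' :: "nat \<Rightarrow> 'ap set"
    and T :: "nat list set" and l :: "nat list \<Rightarrow> 'q" and f :: "'q gpos list \<Rightarrow> 'q gpos"
  assumes wf: "aca_wf \<Sigma> A" and word: "word_over \<Sigma> \<sigma>'" and run: "run_tree A \<sigma> T l"
    and strategy: "dup_strategy A \<sigma> \<sigma>' f"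
begin

definition history :: "'q gpos list \<Rightarrow> bool" where
  "history H \<longleftrightarrow> play_prefix A \<sigma> \<sigma>' H \<and> consistent_dup_prefix f H"

lemma history_snoc_spoiler:
  assumes "history H" "\<not> dup_owned (last H)" "game_move A \<sigma> \<sigma>' (last H) y"
  shows "history (H @ [y])"
  using assms play_prefix_snoc consistent_dup_prefix_snoc unfolding history_def by blast

lemma history_snoc_duplicator:
  assumes "history H" "dup_owned (last H)"
  shows "game_move A \<sigma> \<sigma>' (last H) (f H)" and "history (H @ [f H])"
  using assms strategy play_prefix_snoc consistent_dup_prefix_snoc
  unfolding history_def dup_strategy_def by blast+

lemma history_close_round:
  assumes "history H" "last H = PCC p q c c' k" "q' \<in> c'"
  obtains p' where "f (H @ [PCQ p q c q' k]) = PQ p' q' (Suc k)" "p' \<in> c"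
    "history (H @ [PCQ p q c q' k, PQ p' q' (Suc k)])"
proof -
  let ?H = "H @ [PCQ p q c q' k]"
  have "history ?H"
    using history_snoc_spoiler assms by (simp add: game_move.intros)
  with history_snoc_duplicator[of ?H]
  have "game_move A \<sigma> \<sigma>' (PCQ p q c q' k) (f ?H)" "history (?H @ [f ?H])"
    by simp_all
  then show ?thesis
    using that by (auto elim: game_move.cases)
qed

definition children :: "nat list \<Rightarrow> 'q set" where
  "children N = {l (N @ [m]) | m. N @ [m] \<in> T}"

definition sim_inv :: "'q gpos list \<Rightarrow> nat list \<Rightarrow> nat \<Rightarrow> bool" where
  "sim_inv H N k \<longleftrightarrow> history H \<and> length H = 4 * k + 1 \<and> N \<in> T \<and> length N = k \<and>
     (\<exists>q \<in> states A. last H = PQ (l N) q k)"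

lemma sim_round_opening:
  assumes "sim_inv H N k"
  obtains q c' where "last H = PQ (l N) q k"
    "f (H @ [PC (l N) q (children N) k]) = PCC (l N) q (children N) c' k"
    "c' \<in> trans A q (\<sigma>' k)" "c' \<noteq> {}" "c' \<subseteq> states A"
    "history (H @ [PC (l N) q (children N) k, PCC (l N) q (children N) c' k])"
proof -
  from assms obtain q where q: "q \<in> states A" "last H = PQ (l N) q k"
    and "history H" "N \<in> T" "length N = k"
    unfolding sim_inv_def by blast
  let ?H = "H @ [PC (l N) q (children N) k]"
  have "children N \<in> trans A (l N) (\<sigma> k)"
    using run \<open>N \<in> T\<close> \<open>length N = k\<close> unfolding run_tree_def children_def by auto
  then have "history ?H"
    using history_snoc_spoiler[OF \<open>history H\<close>] q by (simp add: game_move.intros)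
  with history_snoc_duplicator[of ?H]
  have "game_move A \<sigma> \<sigma>' (PC (l N) q (children N) k) (f ?H)" "history (?H @ [f ?H])"
    by simp_all
  then obtain c' where c': "f ?H = PCC (l N) q (children N) c' k" "c' \<in> trans A q (\<sigma>' k)"
    by (auto elim: game_move.cases)
  moreover have "c' \<noteq> {}" "c' \<subseteq> states A"
    using wf word q(1) c'(2) unfolding aca_wf_def word_over_def by blast+
  ultimately show ?thesis
    using that q(2) \<open>history (?H @ [f ?H])\<close> by simp
qed

text \<open>Duplicator's last move of a round picks a state of children N, so the SOME below
  selects a child of N labelled with it.\<close>

fun sim_round :: "'q gpos list \<times> nat list \<Rightarrow> nat \<Rightarrow> 'q gpos list \<times> nat list" where
  "sim_round (H, N) n =
    (let H1 = H @ [open_with (children N) (last H)];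
         H3 = H1 @ [f H1, pick_nth n (f H1)]
     in (H3 @ [f H3], N @ [SOME m. N @ [m] \<in> T \<and> l (N @ [m]) = alt_state (f H3)]))"

declare sim_round.simps [simp del]

lemma sim_round_closing:
  assumes "sim_inv H N k" "last H = PQ (l N) q k"
    and "f (H @ [PC (l N) q (children N) k]) = PCC (l N) q (children N) c' k"
    and "history (H @ [PC (l N) q (children N) k, PCC (l N) q (children N) c' k])"
    and "from_nat_into c' n \<in> c'" "c' \<subseteq> states A"
  shows "sim_inv (fst (sim_round (H, N) n)) (snd (sim_round (H, N) n)) (Suc k)"
    and "prefix H (fst (sim_round (H, N) n))"
    and "\<exists>m. snd (sim_round (H, N) n) = N @ [m]"
    and "dom_state (last (fst (sim_round (H, N) n))) = from_nat_into c' n"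
proof -
  let ?q' = "from_nat_into c' n"
  have "last (H @ [PC (l N) q (children N) k, PCC (l N) q (children N) c' k])
      = PCC (l N) q (children N) c' k"
    by simp
  then obtain p' where p':
    "f ((H @ [PC (l N) q (children N) k, PCC (l N) q (children N) c' k])
       @ [PCQ (l N) q (children N) ?q' k]) = PQ p' ?q' (Suc k)"
    "p' \<in> children N"
    "history ((H @ [PC (l N) q (children N) k, PCC (l N) q (children N) c' k])
       @ [PCQ (l N) q (children N) ?q' k, PQ p' ?q' (Suc k)])"
    using history_close_round[OF assms(4) _ assms(5)] by blast
  have "\<exists>m. N @ [m] \<in> T \<and> l (N @ [m]) = p'"
    using p'(2) unfolding children_def by blast
  then obtain m where m: "N @ [m] \<in> T" "l (N @ [m]) = p'"
    and "m = (SOME m. N @ [m] \<in> T \<and> l (N @ [m]) = p')"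
    by (metis (mono_tags, lifting) someI_ex)
  then have round: "sim_round (H, N) n = (H @ [PC (l N) q (children N) k,
      PCC (l N) q (children N) c' k, PCQ (l N) q (children N) ?q' k, PQ p' ?q' (Suc k)], N @ [m])"
    using assms(2,3) p'(1) by (simp add: sim_round.simps Let_def)
  have "?q' \<in> states A"
    using assms(5,6) by blast
  then show "sim_inv (fst (sim_round (H, N) n)) (snd (sim_round (H, N) n)) (Suc k)"
    using assms(1) m p'(3) unfolding round sim_inv_def by simp
  show "prefix H (fst (sim_round (H, N) n))" "\<exists>m. snd (sim_round (H, N) n) = N @ [m]"
    "dom_state (last (fst (sim_round (H, N) n))) = ?q'"
    by (simp_all add: round)
qed

lemma sim_round_step:
  assumes "sim_inv H N k"
  obtains c' where "c' \<in> trans A (dom_state (last H)) (\<sigma>' k)" "countable c'" "c' \<noteq> {}"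
    "\<And>n. sim_inv (fst (sim_round (H, N) n)) (snd (sim_round (H, N) n)) (Suc k)"
    "\<And>n. prefix H (fst (sim_round (H, N) n))"
    "\<And>n. \<exists>m. snd (sim_round (H, N) n) = N @ [m]"
    "\<And>n. dom_state (last (fst (sim_round (H, N) n))) = from_nat_into c' n"
proof -
  obtain q c' where q: "last H = PQ (l N) q k"
    and c': "f (H @ [PC (l N) q (children N) k]) = PCC (l N) q (children N) c' k"
      "c' \<in> trans A q (\<sigma>' k)" "c' \<noteq> {}" "c' \<subseteq> states A"
    and history: "history (H @ [PC (l N) q (children N) k, PCC (l N) q (children N) c' k])"
    using sim_round_opening[OF assms] by blast
  have "finite (states A)"
    using wf by (simp add: aca_wf_def)
  with c'(4) have "countable c'"
    by (meson countable_finite finite_subset)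
  moreover have "c' \<in> trans A (dom_state (last H)) (\<sigma>' k)"
    using q c'(2) by simp
  ultimately show ?thesis
    using that c'(3) sim_round_closing[OF assms q c'(1) history from_nat_into[OF c'(3)] c'(4)]
    by metis
qed

definition sim_state :: "nat list \<Rightarrow> 'q gpos list \<times> nat list" where
  "sim_state x = foldl sim_round ([game_init A], []) x"

definition sim_label :: "nat list \<Rightarrow> 'q" where
  "sim_label x = dom_state (last (fst (sim_state x)))"

lemma sim_state_snoc: "sim_state (x @ [n]) = sim_round (fst (sim_state x), snd (sim_state x)) n"
  by (simp add: sim_state_def)

lemma sim_inv_sim_state: "sim_inv (fst (sim_state x)) (snd (sim_state x)) (length x)"
proof (induction x rule: rev_induct)
  case Nil
  have "init A \<in> states A"
    using wf by (simp add: aca_wf_def)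
  moreover have "[] \<in> T" "l [] = init A"
    using run unfolding run_tree_def by auto
  ultimately show ?case
    by (simp add: sim_state_def sim_inv_def history_def play_prefix_def
        consistent_dup_prefix_def game_init_def)
next
  case (snoc n x)
  obtain c' where "\<And>n. sim_inv (fst (sim_round (fst (sim_state x), snd (sim_state x)) n))
      (snd (sim_round (fst (sim_state x), snd (sim_state x)) n)) (Suc (length x))"
    using sim_round_step[OF snoc] by blast
  then show ?case
    by (simp add: sim_state_snoc)
qed

lemma run_tree_sim_label: "run_tree A \<sigma>' UNIV sim_label"
  unfolding run_tree_def
proof (intro conjI ballI allI impI)
  fix x
  obtain c' where c': "c' \<in> trans A (sim_label x) (\<sigma>' (length x))" "countable c'" "c' \<noteq> {}"
    and labels: "\<And>n. dom_state (last (fst (sim_round (fst (sim_state x), snd (sim_state x)) n)))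
      = from_nat_into c' n"
    using sim_round_step[OF sim_inv_sim_state[of x]] unfolding sim_label_def by metis
  have "{sim_label (x @ [n]) | n. x @ [n] \<in> UNIV} = range (from_nat_into c')"
    using labels by (auto simp: sim_label_def sim_state_snoc)
  also have "\<dots> = c'"
    using c' by simp
  finally show "{sim_label (x @ [n]) | n. x @ [n] \<in> UNIV} \<in> trans A (sim_label x) (\<sigma>' (length x))"
    using c'(1) by simp
qed (simp_all add: sim_label_def sim_state_def game_init_def)

lemma accepting_run_sim_label:
  assumes "accepting_run A T l"
    and "\<And>\<rho>. is_play A \<sigma> \<sigma>' \<rho> \<Longrightarrow> consistent_dup f \<rho> \<Longrightarrow> dup_wins_play A \<rho>"
  shows "accepting_run A UNIV sim_label"
  unfolding accepting_run_def
proof (intro allI impI)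
  fix b
  assume "infinite_branch UNIV b"
  then obtain dir where "b 0 = []" and dir: "\<And>k. b (Suc k) = b k @ [dir k]"
    unfolding infinite_branch_def by metis
  then have len: "length (b k) = k" for k
    by (induction k) simp_all
  define H where "H k = fst (sim_state (b k))" for k
  define N where "N k = snd (sim_state (b k))" for k
  have inv: "sim_inv (H k) (N k) k" for k
    using sim_inv_sim_state[of "b k"] by (simp add: H_def N_def len)
  have step: "prefix (H k) (H (Suc k)) \<and> (\<exists>m. N (Suc k) = N k @ [m])" for k
    using sim_round_step[OF inv[of k]] unfolding H_def N_def dir sim_state_snoc by metis
  then have chain: "prefix (H k) (H (Suc k))" for k
    by blast
  have long: "k < length (H k)" and history: "history (H k)" for k
    using inv[of k] unfolding sim_inv_def by simp_all
  let ?\<rho> = "\<lambda>i. H i ! i"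
  have "is_play A \<sigma> \<sigma>' ?\<rho>" "consistent_dup f ?\<rho>"
    using play_of_prefix_chain[of H, OF chain long] history unfolding history_def by blast+
  with assms(2) have wins: "dup_wins_play A ?\<rho>"
    by blast
  have round_start: "?\<rho> (4 * k) = last (H k)" for k
  proof -
    have "length (H k) = Suc (4 * k)"
      using inv[of k] unfolding sim_inv_def by simp
    moreover from this have "H k \<noteq> []" "4 * k < length (H k)"
      by auto
    ultimately show ?thesis
      using prefix_chain_nth[OF chain long, of "4 * k" k] by (simp add: last_conv_nth)
  qed
  have "infinite_branch T N"
    unfolding infinite_branch_def
  proof (intro conjI allI)
    show "N 0 = []"
      using \<open>b 0 = []\<close> by (simp add: N_def sim_state_def)
  next
    fix k
    show "N k \<in> T"
      using inv[of k] unfolding sim_inv_def by simp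
    show "\<exists>m. N (Suc k) = N k @ [m]"
      using step by blast
  qed
  then have "finite {k. l (N k) \<in> rej A}"
    using assms(1) unfolding accepting_run_def by blast
  moreover have "alt_state (?\<rho> (4 * k)) = l (N k)" for k
    using inv[of k] round_start[of k] unfolding sim_inv_def by auto
  ultimately have "finite {k. dom_state (?\<rho> (4 * k)) \<in> rej A}"
    using dup_wins_play_round_starts[OF \<open>is_play A \<sigma> \<sigma>' ?\<rho>\<close> wins] by simp
  then show "finite {k. sim_label (b k) \<in> rej A}"
    using round_start by (simp add: sim_label_def H_def)
qed

end

lemma dup_wins_game_language_inclusion:
  assumes "aca_wf \<Sigma> A" "word_over \<Sigma> \<sigma>'" "dup_wins_game A \<sigma> \<sigma>'" "aca_accepts A \<sigma>"
  shows "aca_accepts A \<sigma>'"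
proof -
  obtain T l where "run_tree A \<sigma> T l" and accepting: "accepting_run A T l"
    using assms(4) unfolding aca_accepts_def by blast
  moreover obtain f where "dup_strategy A \<sigma> \<sigma>' f"
    and wins: "\<And>\<rho>. is_play A \<sigma> \<sigma>' \<rho> \<Longrightarrow> consistent_dup f \<rho> \<Longrightarrow> dup_wins_play A \<rho>"
    using assms(3) unfolding dup_wins_game_def by blast
  ultimately interpret run_transfer \<Sigma> A \<sigma> \<sigma>' T l f
    using assms(1,2) by unfold_locales
  show ?thesis
    unfolding aca_accepts_def
    using run_tree_sim_label accepting_run_sim_label[OF accepting wins] by blast
qed

lemma word_over_comp:
  assumes "is_strategy Inp Out t" "input_seq Inp \<gamma>"
  shows "word_over (Inp \<union> Out) (comp t \<gamma>)"
proof -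
  have inputs: "\<gamma> j \<subseteq> Inp" for j
    using assms(2) unfolding input_seq_def word_over_def by blast
  have "\<forall>w. set w \<subseteq> Pow Inp \<longrightarrow> t w \<subseteq> Out"
    using assms(1) unfolding is_strategy_def by (rule conjunct1)
  moreover have "set (map \<gamma> [0..<j]) \<subseteq> Pow Inp" for j
    using inputs by auto
  ultimately show ?thesis
    using inputs unfolding word_over_def comp_def by blast
qed

theorem theorem5:
  fixes Inp Out :: "'ap set"
    and \<phi> :: "'ap ltl"
    and A :: "('q, 'ap) aca"
    and s :: "'ap set list \<Rightarrow> 'ap set"
  assumes "finite Inp" and "finite Out" and "Inp \<inter> Out = {}"
    and "ltl_props \<phi> \<subseteq> Inp \<union> Out"
    and "aca_wf (Inp \<union> Out) A"
    and "\<forall>\<sigma>. word_over (Inp \<union> Out) \<sigma> \<longrightarrow> (aca_accepts A \<sigma> \<longleftrightarrow> ltl_sat \<sigma> \<phi>)"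
    and "is_strategy Inp Out s"
    and "delay_dominant A Inp Out s"
  shows "remorsefree_dominant \<phi> Inp Out s"
  unfolding remorsefree_dominant_def
proof (intro allI impI)
  fix t \<gamma>
  assume t: "is_strategy Inp Out t \<and> input_seq Inp \<gamma> \<and> ltl_sat (comp t \<gamma>) \<phi>"
  have language: "aca_accepts A \<sigma> \<longleftrightarrow> ltl_sat \<sigma> \<phi>" if "word_over (Inp \<union> Out) \<sigma>" for \<sigma>
    using assms(6) that by blast
  have "aca_accepts A (comp t \<gamma>)"
    using t language[OF word_over_comp] by blast
  moreover have "dup_wins_game A (comp t \<gamma>) (comp s \<gamma>)"
    using assms(8) t
    unfolding delay_dominant_def delay_dominates_def delay_dominates_on_def by blast
  moreover have "word_over (Inp \<union> Out) (comp s \<gamma>)"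
    using assms(7) t word_over_comp by blast
  ultimately show "ltl_sat (comp s \<gamma>) \<phi>"
    using dup_wins_game_language_inclusion[OF assms(5)] language by blast
qed

end
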